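(* Let $k>\ell\ge1$, $m\ge1$ and $w=a^kba^\ell b^m$, and let $u\in L^{\epsilon}_{\vdash_{\{w\}}}$. If $a^\alpha b$ is a prefix of $u$ then $\alpha\ge k$; if $a^\alpha b^2$ is a prefix of $u$ then $\alpha\ge 2k$.
   Context: For words $u,v$, the shuffle $u \sqcup\!\sqcup v$ is the set of all words $u_1v_1\cdots u_kv_k$ with $k\ge 1$, $u=u_1\cdots u_k$, $v=v_1\cdots v_k$ (pieces possibly empty). For a finite set $I$ of words, $v \vdash_I w$ means $w \in v \sqcup\!\sqcup u$ for some $u\in I$; $\vdash_I^*$ is its reflexive-transitive closure and $L^{\epsilon}_{\vdash_I}=\{w : \epsilon \vdash_I^* w\}$. *)

theory Defs
  imports Main
begin

definition shuffle :: "'a list \<Rightarrow> 'a list \<Rightarrow> 'a list set" where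
  "shuffle u v = {w. \<exists>us vs. length us = length vs \<and> length us \<ge> 1 \<and>
      u = concat us \<and> v = concat vs \<and> w = concat (map (\<lambda>(x, y). x @ y) (zip us vs))}"

definition ins_step :: "'a list set \<Rightarrow> 'a list \<Rightarrow> 'a list \<Rightarrow> bool" where
  "ins_step I v w \<longleftrightarrow> (\<exists>u\<in>I. w \<in> shuffle v u)"

definition L_eps :: "'a list set \<Rightarrow> 'a list set" where
  "L_eps I = {w. (ins_step I)\<^sup>*\<^sup>* [] w}"

end

theory Submission
  imports Defs
begin

text \<open>The invariant is: every prefix \<open>a\<^sup>\<alpha>b\<close> has \<open>\<alpha> \<ge> k\<close> and every prefix
  \<open>a\<^sup>\<alpha>bb\<close> has \<open>\<alpha> \<ge> 2k\<close>. It holds for the empty word and for \<open>w\<close>, and it is preserved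
  by shuffling: the leading \<open>a\<close>-block of a shuffle of \<open>v\<close> and \<open>w\<close> splits into leading
  \<open>a\<close>-blocks of \<open>v\<close> and \<open>w\<close>, and a \<open>b\<close> (resp. \<open>bb\<close>) following it comes from \<open>v\<close>, from
  \<open>w\<close>, or one \<open>b\<close> from each.\<close>

lemma append_in_shuffles_leftI: "zs \<in> shuffles xs ys \<Longrightarrow> p @ zs \<in> shuffles (p @ xs) ys"
  by (induction p) (auto intro: Cons_in_shuffles_leftI)

lemma append_in_shuffles_rightI: "zs \<in> shuffles xs ys \<Longrightarrow> p @ zs \<in> shuffles xs (p @ ys)"
  by (induction p) (auto intro: Cons_in_shuffles_rightI)

lemma concat_zip_in_shuffles:
  "length us = length vs \<Longrightarrow>
   concat (map (\<lambda>(x, y). x @ y) (zip us vs)) \<in> shuffles (concat us) (concat vs)"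
proof (induction us arbitrary: vs)
  case Nil
  then show ?case by simp
next
  case (Cons x us)
  then obtain y vs' where "vs = y # vs'"
    by (cases vs) auto
  with Cons show ?case
    by (simp add: append_in_shuffles_leftI append_in_shuffles_rightI)
qed

lemma shuffle_subset_shuffles: "shuffle u v \<subseteq> shuffles u v"
  unfolding shuffle_def using concat_zip_in_shuffles by blast

lemma Cons_in_shufflesE:
  assumes "z # zs \<in> shuffles xs ys"
  obtains xs' where "xs = z # xs'" "zs \<in> shuffles xs' ys"
    | ys' where "ys = z # ys'" "zs \<in> shuffles xs ys'"
  using assms unfolding Cons_in_shuffles_iff by (metis list.collapse)

lemma replicate_append_in_shuffles:
  assumes "replicate \<beta> a @ s \<in> shuffles v w"
  shows "\<exists>i j v' w'. i + j = \<beta> \<and> v = replicate i a @ v' \<and> w = replicate j a @ w'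
           \<and> s \<in> shuffles v' w'"
  using assms
proof (induction \<beta> arbitrary: v w)
  case 0
  then show ?case by force
next
  case (Suc \<beta>)
  then have "a # (replicate \<beta> a @ s) \<in> shuffles v w"
    by simp
  then show ?case
  proof (cases rule: Cons_in_shufflesE)
    case (1 v')
    with Suc.IH obtain i j v'' w' where "i + j = \<beta>" "v' = replicate i a @ v''"
      "w = replicate j a @ w'" "s \<in> shuffles v'' w'"
      by blast
    with 1 show ?thesis
      by (intro exI[of _ "Suc i"] exI[of _ j]) auto
  next
    case (2 w')
    with Suc.IH obtain i j v' w'' where "i + j = \<beta>" "v = replicate i a @ v'"
      "w' = replicate j a @ w''" "s \<in> shuffles v' w''"
      by blast
    with 2 show ?thesis
      by (intro exI[of _ i] exI[of _ "Suc j"]) auto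
  qed
qed

lemma replicate_append_Cons_eq_iff:
  "a \<noteq> b \<Longrightarrow> replicate i a @ b # x = replicate j a @ b # y \<longleftrightarrow> i = j \<and> x = y"
proof (induction i arbitrary: j)
  case 0
  then show ?case by (cases j) auto
next
  case (Suc i)
  then show ?case by (cases j) auto
qed

definition leading_block_ge :: "'a \<Rightarrow> 'a \<Rightarrow> nat \<Rightarrow> 'a list \<Rightarrow> bool" where
  "leading_block_ge a b k x \<longleftrightarrow> (\<forall>\<alpha> r. x = replicate \<alpha> a @ b # r \<longrightarrow> k \<le> \<alpha>)
     \<and> (\<forall>\<alpha> r. x = replicate \<alpha> a @ b # b # r \<longrightarrow> 2 * k \<le> \<alpha>)"

lemma leading_block_ge_Nil: "leading_block_ge a b k []"
  unfolding leading_block_ge_def by simp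

lemma leading_block_ge_replicate_Cons:
  assumes "a \<noteq> b" and "\<forall>r. c \<noteq> b # r"
  shows "leading_block_ge a b k (replicate k a @ b # c)"
  using assms unfolding leading_block_ge_def by (auto simp: replicate_append_Cons_eq_iff)

lemma leading_block_ge_shuffles_bb:
  assumes "leading_block_ge a b k v" "leading_block_ge a b k w"
    and "v = replicate i a @ b # v'" "w = replicate j a @ w'" "b # r \<in> shuffles v' w'"
  shows "2 * k \<le> i + j"
  using assms(5)
proof (cases rule: Cons_in_shufflesE)
  case (1 v'')
  with assms(1,3) show ?thesis
    unfolding leading_block_ge_def by fastforce
next
  case (2 w'')
  with assms(1-4) show ?thesis
    unfolding leading_block_ge_def by fastforce
qed

lemma leading_block_ge_shuffles:
  assumes "leading_block_ge a b k v" "leading_block_ge a b k w" "z \<in> shuffles v w"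
  shows "leading_block_ge a b k z"
  unfolding leading_block_ge_def
proof (intro conjI allI impI)
  fix \<beta> r
  assume "z = replicate \<beta> a @ b # r"
  with assms(3) obtain i j v' w' where split: "i + j = \<beta>" "v = replicate i a @ v'"
      "w = replicate j a @ w'" "b # r \<in> shuffles v' w'"
    using replicate_append_in_shuffles by metis
  from split(4) show "k \<le> \<beta>"
  proof (cases rule: Cons_in_shufflesE)
    case 1
    with assms(1) split(1,2) show ?thesis
      unfolding leading_block_ge_def by fastforce
  next
    case 2
    with assms(2) split(1,3) show ?thesis
      unfolding leading_block_ge_def by fastforce
  qed
next
  fix \<beta> r
  assume "z = replicate \<beta> a @ b # b # r"
  with assms(3) obtain i j v' w' where split: "i + j = \<beta>" "v = replicate i a @ v'"
      "w = replicate j a @ w'" "b # b # r \<in> shuffles v' w'"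
    using replicate_append_in_shuffles by metis
  from split(4) show "2 * k \<le> \<beta>"
  proof (cases rule: Cons_in_shufflesE)
    case (1 v'')
    with leading_block_ge_shuffles_bb[OF assms(1,2)] split(1-3) show ?thesis
      by blast
  next
    case (2 w'')
    then have "b # r \<in> shuffles w'' v'"
      by (simp add: shuffles_commutes)
    with leading_block_ge_shuffles_bb[OF assms(2,1)] split(1-3) 2(1) show ?thesis
      by (metis add.commute)
  qed
qed

lemma L_eps_invariant:
  assumes "P []" and "\<And>v u z. P v \<Longrightarrow> u \<in> I \<Longrightarrow> z \<in> shuffle v u \<Longrightarrow> P z"
    and "x \<in> L_eps I"
  shows "P x"
proof -
  have "(ins_step I)\<^sup>*\<^sup>* [] x"
    using assms(3) unfolding L_eps_def by simp
  then show ?thesis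
    by (induction rule: rtranclp_induct) (use assms(1,2) in \<open>auto simp: ins_step_def\<close>)
qed

theorem lemma6:
  fixes a b :: 'c and k l m \<alpha> :: nat and u :: "'c list"
  assumes "a \<noteq> b" and "k > l" and "l \<ge> 1" and "m \<ge> 1"
    and "u \<in> L_eps {replicate k a @ [b] @ replicate l a @ replicate m b}"
  shows "((\<exists>v. u = replicate \<alpha> a @ [b] @ v) \<longrightarrow> \<alpha> \<ge> k)
       \<and> ((\<exists>v. u = replicate \<alpha> a @ [b, b] @ v) \<longrightarrow> \<alpha> \<ge> 2 * k)"
proof -
  have "\<forall>r. replicate l a @ replicate m b \<noteq> b # r"
    using assms(1,3) by (cases l) auto
  then have "leading_block_ge a b k (replicate k a @ [b] @ replicate l a @ replicate m b)"
    using leading_block_ge_replicate_Cons[OF assms(1)] by simp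
  then have "leading_block_ge a b k u"
    by (intro L_eps_invariant[where P = "leading_block_ge a b k",
          OF leading_block_ge_Nil _ assms(5)])
      (metis leading_block_ge_shuffles shuffle_subset_shuffles singletonD subsetD)
  then show ?thesis
    unfolding leading_block_ge_def by auto
qed

end
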